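(* Let $\tau$ be a $T_1$-topology on $\mathcal{C}(p,q)$ such that $(\mathcal{C}(p,q),\tau)$ is a semitopological semigroup and the maps $\mathcal{C}(p,q)\to E(\mathcal{C}(p,q))$, $x\mapsto xx^{-1}$ and $x\mapsto x^{-1}x$, are continuous. If there exists an idempotent $q^ip^i\in\mathcal{C}(p,q)$ such that the subspace $E(\mathcal{C}(p,q))$ is semiregular at $q^ip^i$, then $\tau$ is discrete.
   Context: The bicyclic monoid $\mathcal{C}(p,q)$ is the monoid generated by $p,q$ subject only to $pq=1$; elements are uniquely $q^ip^j$, $i,j\in\omega$, with multiplication $q^kp^l\cdot q^mp^n = q^{k-l+m}p^n$ if $l<m$, $=q^kp^n$ if $l=m$, $=q^kp^{l-m+n}$ if $l>m$, and inversion $(q^ip^j)^{-1}=q^jp^i$. $E(\mathcal{C}(p,q))=\{q^ip^i:i\in\omega\}$ with the subspace topology. Semitopological semigroup: multiplication separately continuous. A subspace $Y$ is semiregular at $x\in Y$ if $x$ has a neighbourhood base in $Y$ consisting of sets $U$ with $U=\mathrm{int}_Y(\mathrm{cl}_Y(U))$. *)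

theory Defs
  imports "HOL-Analysis.Analysis"
begin

text \<open>The bicyclic monoid C(p,q): the element q^i p^j is represented by the pair (i,j).\<close>

definition bc_mult :: "nat \<times> nat \<Rightarrow> nat \<times> nat \<Rightarrow> nat \<times> nat" where
  "bc_mult x y = (case x of (k,l) \<Rightarrow> case y of (m,n) \<Rightarrow>
      if l < m then (k + (m - l), n)
      else if l = m then (k, n)
      else (k, (l - m) + n))"

definition bc_inv :: "nat \<times> nat \<Rightarrow> nat \<times> nat" where
  "bc_inv x = (snd x, fst x)"

definition bc_E :: "(nat \<times> nat) set" where
  "bc_E = {(i, i) | i. True}"

definition bc_semitopological :: "(nat \<times> nat) topology \<Rightarrow> bool" where
  "bc_semitopological T \<longleftrightarrow> topspace T = UNIV \<and>
     (\<forall>a. continuous_map T T (\<lambda>x. bc_mult a x) \<and> continuous_map T T (\<lambda>x. bc_mult x a))"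

definition semiregular_at :: "'a topology \<Rightarrow> 'a set \<Rightarrow> 'a \<Rightarrow> bool" where
  "semiregular_at X Y x \<longleftrightarrow> x \<in> Y \<and>
     (\<forall>W. openin (subtopology X Y) W \<and> x \<in> W \<longrightarrow>
        (\<exists>U. x \<in> U \<and> U \<subseteq> W \<and>
             U = (subtopology X Y) interior_of ((subtopology X Y) closure_of U)))"

end

theory Submission
  imports Defs
begin

text \<open>Write \<open>E\<close> for the subspace of idempotents \<open>(k, k)\<close>. If no point of \<open>E\<close> were isolated,
  any two nonempty open subsets of \<open>E\<close> would meet: for disjoint open \<open>A \<ni> (m, m)\<close> and
  \<open>B \<ni> (n, n)\<close> with \<open>m \<le> n\<close>, the open set of those \<open>e \<in> A\<close> with \<open>(n, n) e \<in> B\<close> contains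
  \<open>(m, m)\<close> and only idempotents \<open>(k, k)\<close> with \<open>k \<le> n\<close>, so being finite in a \<open>T\<^sub>1\<close>-space it
  isolates \<open>(m, m)\<close>. But then every nonempty regular open set of \<open>E\<close> is all of \<open>E\<close>, contradicting
  semiregularity. Once one idempotent \<open>(a, a)\<close> is isolated, the preimage of \<open>{(a, a)}\<close> under
  \<open>e \<mapsto> (a, 0) (0, n) e (n, 0) (0, a)\<close> is the finite open set \<open>{(k, k) | k \<le> n}\<close>, so every
  idempotent is isolated; finally \<open>{(i, j)}\<close> is the preimage of \<open>{(i, i)}\<close> and \<open>{(j, j)}\<close> under
  \<open>x \<mapsto> x x\<^sup>-\<^sup>1\<close> and \<open>x \<mapsto> x\<^sup>-\<^sup>1 x\<close>.\<close>

lemma openin_singleton_of_finite_openin: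
  assumes "t1_space X" "openin X U" "finite U" "x \<in> U"
  shows "openin X {x}"
proof -
  have "U - {x} \<subseteq> topspace X"
    using openin_subset[OF assms(2)] by blast
  with assms(1,3) have "closedin X (U - {x})"
    by (simp add: t1_space_closedin_finite)
  with \<open>openin X U\<close> have "openin X (U - (U - {x}))"
    by (rule openin_diff)
  moreover have "U - (U - {x}) = {x}"
    using \<open>x \<in> U\<close> by blast
  ultimately show ?thesis
    by simp
qed

lemma semiregular_at_disjoint_openin:
  assumes "t1_space X" "semiregular_at X Y x" "x \<in> topspace X"
    and "c \<in> topspace X \<inter> Y" "c \<noteq> x"
  obtains U V where "openin (subtopology X Y) U" "openin (subtopology X Y) V"
    "U \<noteq> {}" "V \<noteq> {}" "U \<inter> V = {}"
proof -
  define E where "E = subtopology X Y"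
  have "closedin E {c}"
    using assms by (simp add: E_def closedin_t1_singleton t1_space_subtopology)
  then have "openin E (topspace E - {c})"
    by (simp add: openin_diff)
  moreover have "x \<in> topspace E - {c}" "x \<in> Y"
    using assms by (auto simp: E_def semiregular_at_def)
  ultimately obtain U where U: "x \<in> U" "U \<subseteq> topspace E - {c}"
    and regular: "U = E interior_of (E closure_of U)"
    using \<open>semiregular_at X Y x\<close> unfolding semiregular_at_def E_def by blast
  have "openin E U"
    by (subst regular) (rule openin_interior_of)
  have "E closure_of U \<noteq> topspace E"
  proof
    assume "E closure_of U = topspace E"
    then have "U = topspace E"
      using regular by simp
    with U(2) assms(4) show False
      by (auto simp: E_def)
  qed
  then obtain V where "openin E V" "V \<noteq> {}" "U \<inter> V = {}"
    by (auto simp: dense_intersects_open)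
  with \<open>openin E U\<close> \<open>x \<in> U\<close> show thesis
    using that by (auto simp: E_def)
qed

lemma mem_bc_E: "x \<in> bc_E \<longleftrightarrow> (\<exists>k. x = (k, k))"
  by (auto simp: bc_E_def)

lemma bc_mult_one_right [simp]: "bc_mult x (0, 0) = x"
  by (auto simp: bc_mult_def split: prod.split)

lemma bc_mult_idempotents [simp]: "bc_mult (m, m) (n, n) = (max m n, max m n)"
  by (auto simp: bc_mult_def)

lemma bc_mult_shift_idempotent [simp]: "bc_mult (a, 0) (bc_mult (k, k) (0, a)) = (k + a, k + a)"
  by (auto simp: bc_mult_def)

lemma bc_mult_unshift_idempotent [simp]: "bc_mult (0, n) (bc_mult (k, k) (n, 0)) = (k - n, k - n)"
  by (auto simp: bc_mult_def)

lemma bc_mult_inv_right [simp]: "bc_mult x (bc_inv x) = (fst x, fst x)"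
  by (auto simp: bc_mult_def bc_inv_def split: prod.split)

lemma bc_mult_inv_left [simp]: "bc_mult (bc_inv x) x = (snd x, snd x)"
  by (auto simp: bc_mult_def bc_inv_def split: prod.split)

lemma bc_semitopological_topspace: "bc_semitopological T \<Longrightarrow> topspace T = UNIV"
  by (simp add: bc_semitopological_def)

lemma continuous_map_bc_mult_two_sided:
  assumes "bc_semitopological T"
  shows "continuous_map T T (\<lambda>x. bc_mult u (bc_mult x v))"
proof -
  have "continuous_map T T (\<lambda>x. bc_mult x v)" "continuous_map T T (bc_mult u)"
    using assms unfolding bc_semitopological_def by blast+
  from continuous_map_compose[OF this] show ?thesis
    by (simp add: o_def)
qed

lemma continuous_map_bc_E_two_sided:
  assumes "bc_semitopological T" "\<And>k. bc_mult u (bc_mult (k, k) v) \<in> bc_E"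
  shows "continuous_map (subtopology T bc_E) (subtopology T bc_E) (\<lambda>x. bc_mult u (bc_mult x v))"
  using assms continuous_map_bc_mult_two_sided[OF assms(1)]
  by (auto simp: continuous_map_in_subtopology continuous_map_from_subtopology mem_bc_E
      bc_semitopological_topspace)

lemma bc_E_isolated_if_separated:
  assumes "t1_space T" "bc_semitopological T"
    and "openin (subtopology T bc_E) A" "openin (subtopology T bc_E) B"
    and "A \<inter> B = {}" "(m, m) \<in> A" "(n, n) \<in> B" "m \<le> n"
  shows "openin (subtopology T bc_E) {(m, m)}"
proof -
  define E where "E = subtopology T bc_E"
  have A: "openin E A" and B: "openin E B" and "t1_space E"
    using assms(1,3,4) by (simp_all add: E_def t1_space_subtopology)
  have topspace_E: "topspace E = bc_E"
    using assms(2) by (simp add: E_def bc_semitopological_topspace)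
  define F where "F = A \<inter> {x \<in> topspace E. bc_mult (n, n) x \<in> B}"
  have "continuous_map E E (bc_mult (n, n))"
    using continuous_map_bc_E_two_sided[OF assms(2), of "(n, n)" "(0, 0)"]
    by (simp add: E_def mem_bc_E)
  from openin_continuous_map_preimage[OF this B] have "openin E F"
    unfolding F_def using A by (rule openin_Int[rotated])
  moreover have "(m, m) \<in> F"
    using assms(6-8) by (simp add: F_def topspace_E mem_bc_E max_def)
  moreover have "F \<subseteq> (\<lambda>k. (k, k)) ` {..n}"
  proof
    fix x assume "x \<in> F"
    then obtain k where x: "x = (k, k)" "x \<in> A" "bc_mult (n, n) x \<in> B"
      by (auto simp: F_def topspace_E mem_bc_E)
    have "k \<le> n"
    proof (rule ccontr)
      assume "\<not> k \<le> n"
      then have "x \<in> B"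
        using x(1,3) by (simp add: max_def)
      with x(2) \<open>A \<inter> B = {}\<close> show False
        by blast
    qed
    with x(1) show "x \<in> (\<lambda>k. (k, k)) ` {..n}"
      by simp
  qed
  then have "finite F"
    by (rule finite_subset) simp
  ultimately show ?thesis
    using openin_singleton_of_finite_openin[OF \<open>t1_space E\<close>] unfolding E_def by blast
qed

lemma bc_E_has_isolated_point:
  assumes "t1_space T" "bc_semitopological T" "semiregular_at T bc_E (i, i)"
  obtains a where "openin (subtopology T bc_E) {(a, a)}"
proof -
  have "(i, i) \<in> topspace T" "(Suc i, Suc i) \<in> topspace T \<inter> bc_E" "(Suc i, Suc i) \<noteq> (i, i)"
    using assms(2) by (auto simp: bc_semitopological_topspace mem_bc_E)
  then obtain U V where U: "openin (subtopology T bc_E) U" "U \<noteq> {}"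
    and V: "openin (subtopology T bc_E) V" "V \<noteq> {}" and "U \<inter> V = {}"
    using semiregular_at_disjoint_openin[OF assms(1,3)] by metis
  moreover obtain m n where "(m, m) \<in> U" "(n, n) \<in> V"
    using U V openin_subset[of "subtopology T bc_E"] by (force simp: mem_bc_E)
  ultimately show thesis
    using bc_E_isolated_if_separated[OF assms(1,2)] that
    by (metis Int_commute nat_le_linear)
qed

lemma bc_E_all_isolated:
  assumes "t1_space T" "bc_semitopological T" "openin (subtopology T bc_E) {(a, a)}"
  shows "openin (subtopology T bc_E) {(n, n)}"
proof -
  define E where "E = subtopology T bc_E"
  define f where "f = (\<lambda>x. bc_mult (a, 0) (bc_mult (bc_mult (0, n) (bc_mult x (n, 0))) (0, a)))"
  have "continuous_map E E (\<lambda>x. bc_mult (0, n) (bc_mult x (n, 0)))"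
    "continuous_map E E (\<lambda>x. bc_mult (a, 0) (bc_mult x (0, a)))"
    using continuous_map_bc_E_two_sided[OF assms(2)] by (simp_all add: E_def mem_bc_E)
  from continuous_map_compose[OF this] have "continuous_map E E f"
    by (simp add: f_def o_def)
  then have "openin E {x \<in> topspace E. f x \<in> {(a, a)}}"
    using assms(3) unfolding E_def by (blast intro: openin_continuous_map_preimage)
  moreover have "{x \<in> topspace E. f x \<in> {(a, a)}} = (\<lambda>k. (k, k)) ` {..n}"
    using assms(2) by (auto simp: E_def f_def bc_semitopological_topspace mem_bc_E)
  ultimately have "openin E ((\<lambda>k. (k, k)) ` {..n})"
    by simp
  moreover have "t1_space E"
    using assms(1) by (simp add: E_def t1_space_subtopology)
  ultimately show ?thesis
    unfolding E_def[symmetric] by (auto intro: openin_singleton_of_finite_openin)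
qed

lemma bc_isolated_if_idempotents_isolated:
  assumes "bc_semitopological T"
    and "continuous_map T (subtopology T bc_E) (\<lambda>x. bc_mult x (bc_inv x))"
    and "continuous_map T (subtopology T bc_E) (\<lambda>x. bc_mult (bc_inv x) x)"
    and "\<And>n. openin (subtopology T bc_E) {(n, n)}"
  shows "openin T {x}"
proof -
  have "openin T {y \<in> topspace T. bc_mult y (bc_inv y) \<in> {(fst x, fst x)}}" (is "openin T ?P")
    and "openin T {y \<in> topspace T. bc_mult (bc_inv y) y \<in> {(snd x, snd x)}}" (is "openin T ?Q")
    by (rule openin_continuous_map_preimage[OF assms(2) assms(4)]
        openin_continuous_map_preimage[OF assms(3) assms(4)])+
  then have "openin T (?P \<inter> ?Q)"
    by blast
  moreover have "?P \<inter> ?Q = {x}"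
    using assms(1) by (auto simp: bc_semitopological_topspace prod_eq_iff)
  ultimately show ?thesis
    by simp
qed

theorem proposition5:
  fixes T :: "(nat \<times> nat) topology"
  assumes "t1_space T"
    and "bc_semitopological T"
    and "continuous_map T (subtopology T bc_E) (\<lambda>x. bc_mult x (bc_inv x))"
    and "continuous_map T (subtopology T bc_E) (\<lambda>x. bc_mult (bc_inv x) x)"
    and "\<exists>i. semiregular_at T bc_E (i, i)"
  shows "T = discrete_topology UNIV"
proof -
  obtain a where "openin (subtopology T bc_E) {(a, a)}"
    using bc_E_has_isolated_point assms(1,2,5) by blast
  then have "openin (subtopology T bc_E) {(n, n)}" for n
    using bc_E_all_isolated assms(1,2) by blast
  then have "openin T {x}" for x
    using bc_isolated_if_idempotents_isolated assms(2-4) by blast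
  then show ?thesis
    using discrete_topology_unique[of UNIV T] assms(2) by (simp add: bc_semitopological_topspace)
qed

end
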